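(* Let $\alpha$ be a nonzero real number and let $\gamma(t)=\Psi(u(t),v(t))$, $t\in[a,b]$, be a regular curve in $\mathbb H^2$ not passing through $N$. Then $\gamma$ is an $\alpha$-stationary curve if and only if $$\kappa=-\alpha\,\frac{v'\sinh u}{u\,|\gamma'|_\epsilon}.$$
   Context: Let $\langle x,y\rangle_\epsilon=x_1y_1+x_2y_2-x_3y_3$ be the Lorentzian inner product on $\mathbb R^3$ and $|x|_\epsilon=\sqrt{|\langle x,x\rangle_\epsilon|}$. The hyperbolic plane is $\mathbb H^2=\{(x,y,z):x^2+y^2-z^2=-1,\ z>0\}$ with the induced metric. It is parametrized by $\Psi(u,v)=(\sinh u\cos v,\sinh u\sin v,\cosh u)$. Let $N=(0,0,1)$. The hyperbolic distance from $\Psi(u,v)$ ($u\ge 0$) to $N$ is $u$. For a regular curve $\gamma(t)=\Psi(u(t),v(t))$ with $u>0$, we have $|\gamma'|_\epsilon=\sqrt{u'^2+\sinh^2(u)v'^2}$. Its unit normal is $$\mathbf n=\frac{1}{|\gamma'|_\epsilon}\big(u'\sin v+\sinh u\cosh u\,v'\cos v,\ \sinh u\cosh u\,v'\sin v-u'\cos v,\ \sinh^2(u)\,v'\big).$$ Its curvature is $$\kappa=\frac{\langle\gamma'',\mathbf n\rangle_\epsilon}{|\gamma'|_\epsilon^2}=\frac{v'\cosh u\,(2u'^2+v'^2\sinh^2u)+\sinh u\,(u'v''-u''v')}{|\gamma'|_\epsilon^3}.$$ For $\alpha\in\mathbb R$, the energy of $\gamma$ is $$E_\alpha[\gamma]=\int_\gamma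 \mathsf d^\alpha\,ds=\int_a^b u^\alpha\sqrt{u'^2+\sinh^2(u)v'^2}\,dt,$$ where $\mathsf d$ is the hyperbolic distance to $N$. A curve is called $\alpha$-stationary if it is a critical point of $E_\alpha$, i.e. $(u,v)$ satisfies the Euler–Lagrange equations of this functional. Throughout the paper, $\alpha\neq0$ and curves are assumed not to pass through $N$. *)

theory Defs
  imports "HOL-Analysis.Analysis"
begin

text \<open>Curve gamma(t) = Psi(u t, v t) in the hyperbolic plane, described through the
coordinate functions u, v and their first and second derivatives.\<close>

definition lspeed :: "real \<Rightarrow> real \<Rightarrow> real \<Rightarrow> real" where
  "lspeed x p q = sqrt (p\<^sup>2 + (sinh x)\<^sup>2 * q\<^sup>2)"

definition hcurv :: "real \<Rightarrow> real \<Rightarrow> real \<Rightarrow> real \<Rightarrow> real \<Rightarrow> real" where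
  "hcurv x p pp q qq =
     (q * cosh x * (2 * p\<^sup>2 + q\<^sup>2 * (sinh x)\<^sup>2) + sinh x * (p * qq - pp * q))
       / (lspeed x p q) ^ 3"

definition lagr :: "real \<Rightarrow> real \<Rightarrow> real \<Rightarrow> real \<Rightarrow> real \<Rightarrow> real" where
  "lagr \<alpha> x y p q = x powr \<alpha> * lspeed x p q"

text \<open>alpha-stationary: (u,v) satisfies the Euler--Lagrange equations of E_alpha on [a,b],
  i.e. d/dt (dL/du') = dL/du and d/dt (dL/dv') = dL/dv.
  Here u' and v' are the (given) derivatives of u and v.\<close>
definition alpha_stationary ::
  "real \<Rightarrow> (real \<Rightarrow> real) \<Rightarrow> (real \<Rightarrow> real) \<Rightarrow> (real \<Rightarrow> real) \<Rightarrow> (real \<Rightarrow> real)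
     \<Rightarrow> real \<Rightarrow> real \<Rightarrow> bool" where
  "alpha_stationary \<alpha> u v u' v' a b \<longleftrightarrow>
     (\<forall>t\<in>{a..b}.
        ((\<lambda>s. deriv (\<lambda>p. lagr \<alpha> (u s) (v s) p (v' s)) (u' s))
           has_real_derivative deriv (\<lambda>x. lagr \<alpha> x (v t) (u' t) (v' t)) (u t))
          (at t within {a..b})
      \<and> ((\<lambda>s. deriv (\<lambda>q. lagr \<alpha> (u s) (v s) (u' s) q) (v' s))
           has_real_derivative deriv (\<lambda>y. lagr \<alpha> (u t) y (u' t) (v' t)) (v t))
          (at t within {a..b}))"

end

theory Submission
  imports Defs
begin

text \<open>
  Write \<open>P = u\<^sup>\<alpha>\<close> and \<open>w = |\<gamma>'|\<^sub>\<epsilon>\<close>. The momenta of \<open>E\<^sub>\<alpha>\<close> are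
  \<open>P u'/w\<close> and \<open>P sinh\<^sup>2 u v'/w\<close>, and a direct computation (using
  \<open>w\<^sup>2 = u'\<^sup>2 + sinh\<^sup>2 u v'\<^sup>2\<close>) shows that the two Euler--Lagrange residuals are
  \<open>-P sinh u v' \<delta>\<close> and \<open>P sinh u u' \<delta>\<close>, where
  \<open>\<delta> = \<kappa> + \<alpha> v' sinh u/(u w)\<close>. Since \<open>u > 0\<close> and \<open>(u', v') \<noteq> 0\<close> along a
  regular curve, both residuals vanish exactly when \<open>\<delta> = 0\<close>.
\<close>

lemma has_real_derivative_within_Icc_iff:
  fixes f :: "real \<Rightarrow> real"
  assumes "a < b" "t \<in> {a..b}" "(f has_real_derivative D) (at t within {a..b})"
  shows "(f has_real_derivative E) (at t within {a..b}) \<longleftrightarrow> E = D"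
proof -
  have "at t within {a..b} \<noteq> bot"
    using assms(1,2) by (simp add: trivial_limit_within)
  then show ?thesis
    using assms(3) has_field_derivative_unique by blast
qed

lemma lspeed_squared: "(lspeed x p q)\<^sup>2 = p\<^sup>2 + (sinh x)\<^sup>2 * q\<^sup>2"
  unfolding lspeed_def by simp

lemma lspeed_pos_iff: "lspeed x p q > 0 \<longleftrightarrow> p\<^sup>2 + (sinh x)\<^sup>2 * q\<^sup>2 > 0"
  unfolding lspeed_def by simp

lemma lspeed_pos_imp_velocity_nonzero: "lspeed x p q > 0 \<Longrightarrow> p \<noteq> 0 \<or> q \<noteq> 0"
  unfolding lspeed_def by auto

lemma deriv_lagr_x:
  assumes "x > 0" "lspeed x p q > 0"
  shows "deriv (\<lambda>x. lagr \<alpha> x y p q) x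
    = \<alpha> * x powr \<alpha> / x * lspeed x p q + x powr \<alpha> * sinh x * cosh x * q\<^sup>2 / lspeed x p q"
proof (rule DERIV_imp_deriv)
  show "((\<lambda>x. lagr \<alpha> x y p q) has_real_derivative
      \<alpha> * x powr \<alpha> / x * lspeed x p q + x powr \<alpha> * sinh x * cosh x * q\<^sup>2 / lspeed x p q) (at x)"
    using assms unfolding lagr_def lspeed_pos_iff unfolding lspeed_def
    by (auto intro!: derivative_eq_intros simp: field_simps powr_diff)
qed

lemma deriv_lagr_y: "deriv (\<lambda>y. lagr \<alpha> x y p q) y = 0"
  unfolding lagr_def by simp

lemma deriv_lagr_p:
  assumes "lspeed x p q > 0"
  shows "deriv (\<lambda>p. lagr \<alpha> x y p q) p = x powr \<alpha> * p / lspeed x p q"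
proof (rule DERIV_imp_deriv)
  show "((\<lambda>p. lagr \<alpha> x y p q) has_real_derivative x powr \<alpha> * p / lspeed x p q) (at p)"
    using assms unfolding lagr_def lspeed_pos_iff unfolding lspeed_def
    by (auto intro!: derivative_eq_intros simp: field_simps)
qed

lemma deriv_lagr_q:
  assumes "lspeed x p q > 0"
  shows "deriv (\<lambda>q. lagr \<alpha> x y p q) q = x powr \<alpha> * (sinh x)\<^sup>2 * q / lspeed x p q"
proof (rule DERIV_imp_deriv)
  show "((\<lambda>q. lagr \<alpha> x y p q) has_real_derivative x powr \<alpha> * (sinh x)\<^sup>2 * q / lspeed x p q) (at q)"
    using assms unfolding lagr_def lspeed_pos_iff unfolding lspeed_def
    by (auto intro!: derivative_eq_intros simp: field_simps)
qed

lemma has_real_derivative_lspeed: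
  assumes "(u has_real_derivative u' t) (at t within S)"
    and "(u' has_real_derivative u'' t) (at t within S)"
    and "(v' has_real_derivative v'' t) (at t within S)"
    and "lspeed (u t) (u' t) (v' t) > 0"
  shows "((\<lambda>s. lspeed (u s) (u' s) (v' s)) has_real_derivative
     (u' t * u'' t + sinh (u t) * cosh (u t) * u' t * (v' t)\<^sup>2 + (sinh (u t))\<^sup>2 * v' t * v'' t)
       / lspeed (u t) (u' t) (v' t)) (at t within S)"
  using assms unfolding lspeed_pos_iff unfolding lspeed_def
  by (auto intro!: derivative_eq_intros simp: field_simps)

definition curvature_defect :: "real \<Rightarrow> real \<Rightarrow> real \<Rightarrow> real \<Rightarrow> real \<Rightarrow> real \<Rightarrow> real" where
  "curvature_defect \<alpha> x p pp q qq = hcurv x p pp q qq + \<alpha> * (q * sinh x) / (x * lspeed x p q)"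

text \<open>Here \<open>P\<close>, \<open>s\<close>, \<open>c\<close> stand for \<open>x powr \<alpha>\<close>, \<open>sinh x\<close>, \<open>cosh x\<close>, and the
  left-hand sides are the quotient-rule derivatives of the two momenta.\<close>

lemma momentum_u_derivative_identity:
  fixes \<alpha> x w s c P p pp q qq :: real
  assumes "x > 0" "w > 0" "w\<^sup>2 = p\<^sup>2 + s\<^sup>2 * q\<^sup>2"
  shows "((\<alpha> * P / x * p * p + pp * P) * w - P * p * ((p * pp + s * c * p * q\<^sup>2 + s\<^sup>2 * q * qq) / w))
      / (w * w)
    = \<alpha> * P / x * w + P * s * c * q\<^sup>2 / w
      - P * s * q * ((q * c * (2 * p\<^sup>2 + q\<^sup>2 * s\<^sup>2) + s * (p * qq - pp * q)) / w ^ 3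
                     + \<alpha> * (q * s) / (x * w))"
  using assms(1,2) by (simp add: field_simps) (use assms(3) in algebra)

lemma momentum_v_derivative_identity:
  fixes \<alpha> x w s c P p pp q qq :: real
  assumes "x > 0" "w > 0" "w\<^sup>2 = p\<^sup>2 + s\<^sup>2 * q\<^sup>2"
  shows "((\<alpha> * P / x * p * s\<^sup>2 * q + P * (2 * s * c * p * q + s\<^sup>2 * qq)) * w
        - P * s\<^sup>2 * q * ((p * pp + s * c * p * q\<^sup>2 + s\<^sup>2 * q * qq) / w)) / (w * w)
    = P * s * p * ((q * c * (2 * p\<^sup>2 + q\<^sup>2 * s\<^sup>2) + s * (p * qq - pp * q)) / w ^ 3
                   + \<alpha> * (q * s) / (x * w))"
  using assms(1,2) by (simp add: field_simps) (use assms(3) in algebra)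

lemma has_real_derivative_momentum_u:
  assumes u: "(u has_real_derivative u' t) (at t within S)"
    and u': "(u' has_real_derivative u'' t) (at t within S)"
    and v': "(v' has_real_derivative v'' t) (at t within S)"
    and pos: "u t > 0" "lspeed (u t) (u' t) (v' t) > 0"
  shows "((\<lambda>s. u s powr \<alpha> * u' s / lspeed (u s) (u' s) (v' s)) has_real_derivative
     \<alpha> * u t powr \<alpha> / u t * lspeed (u t) (u' t) (v' t)
       + u t powr \<alpha> * sinh (u t) * cosh (u t) * (v' t)\<^sup>2 / lspeed (u t) (u' t) (v' t)
       - u t powr \<alpha> * sinh (u t) * v' t * curvature_defect \<alpha> (u t) (u' t) (u'' t) (v' t) (v'' t))
     (at t within S)"
proof -
  define w where "w = lspeed (u t) (u' t) (v' t)"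
  have w: "w > 0" "w\<^sup>2 = (u' t)\<^sup>2 + (sinh (u t))\<^sup>2 * (v' t)\<^sup>2"
    using pos lspeed_squared unfolding w_def by auto
  have dP: "((\<lambda>s. u s powr \<alpha>) has_real_derivative \<alpha> * u t powr \<alpha> / u t * u' t) (at t within S)"
    using u pos by (auto intro!: derivative_eq_intros simp: field_simps powr_diff)
  note dw = has_real_derivative_lspeed
    [where u=u and u'=u' and u''=u'' and v'=v' and v''=v'', OF u u' v' pos(2)]
  have "lspeed (u t) (u' t) (v' t) \<noteq> 0" using pos(2) by simp
  from DERIV_divide[OF DERIV_mult[OF dP u'] dw this] show ?thesis
    unfolding curvature_defect_def hcurv_def w_def[symmetric]
    by (rule DERIV_cong) (rule momentum_u_derivative_identity[OF pos(1) w])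
qed

lemma has_real_derivative_momentum_v:
  assumes u: "(u has_real_derivative u' t) (at t within S)"
    and u': "(u' has_real_derivative u'' t) (at t within S)"
    and v': "(v' has_real_derivative v'' t) (at t within S)"
    and pos: "u t > 0" "lspeed (u t) (u' t) (v' t) > 0"
  shows "((\<lambda>s. u s powr \<alpha> * (sinh (u s))\<^sup>2 * v' s / lspeed (u s) (u' s) (v' s)) has_real_derivative
     u t powr \<alpha> * sinh (u t) * u' t * curvature_defect \<alpha> (u t) (u' t) (u'' t) (v' t) (v'' t))
     (at t within S)"
proof -
  define w where "w = lspeed (u t) (u' t) (v' t)"
  have w: "w > 0" "w\<^sup>2 = (u' t)\<^sup>2 + (sinh (u t))\<^sup>2 * (v' t)\<^sup>2"
    using pos lspeed_squared unfolding w_def by auto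
  have dnum: "((\<lambda>s. u s powr \<alpha> * (sinh (u s))\<^sup>2 * v' s) has_real_derivative
      \<alpha> * u t powr \<alpha> / u t * u' t * (sinh (u t))\<^sup>2 * v' t
      + u t powr \<alpha> * (2 * sinh (u t) * cosh (u t) * u' t * v' t + (sinh (u t))\<^sup>2 * v'' t))
      (at t within S)"
    using u v' pos by (auto intro!: derivative_eq_intros simp: field_simps powr_diff)
  note dw = has_real_derivative_lspeed
    [where u=u and u'=u' and u''=u'' and v'=v' and v''=v'', OF u u' v' pos(2)]
  have "lspeed (u t) (u' t) (v' t) \<noteq> 0" using pos(2) by simp
  from DERIV_divide[OF dnum dw this] show ?thesis
    unfolding curvature_defect_def hcurv_def w_def[symmetric]
    by (rule DERIV_cong) (rule momentum_v_derivative_identity[OF pos(1) w])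
qed

lemma euler_lagrange_at_iff_curvature_defect_eq_0:
  fixes a b t :: real
  assumes "a < b" and t: "t \<in> {a..b}"
    and u: "(u has_real_derivative u' t) (at t within {a..b})"
    and u': "(u' has_real_derivative u'' t) (at t within {a..b})"
    and v': "(v' has_real_derivative v'' t) (at t within {a..b})"
    and "u t > 0"
    and speed: "\<And>s. s \<in> {a..b} \<Longrightarrow> lspeed (u s) (u' s) (v' s) > 0"
  shows "((\<lambda>s. deriv (\<lambda>p. lagr \<alpha> (u s) (v s) p (v' s)) (u' s))
           has_real_derivative deriv (\<lambda>x. lagr \<alpha> x (v t) (u' t) (v' t)) (u t)) (at t within {a..b})
      \<and> ((\<lambda>s. deriv (\<lambda>q. lagr \<alpha> (u s) (v s) (u' s) q) (v' s))
           has_real_derivative deriv (\<lambda>y. lagr \<alpha> (u t) y (u' t) (v' t)) (v t)) (at t within {a..b})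
      \<longleftrightarrow> curvature_defect \<alpha> (u t) (u' t) (u'' t) (v' t) (v'' t) = 0"
    (is "?EL_u \<and> ?EL_v \<longleftrightarrow> ?\<delta> = 0")
proof -
  note momentum_u = has_real_derivative_momentum_u
    [where u=u and u'=u' and u''=u'' and v'=v' and v''=v'', OF u u' v' \<open>u t > 0\<close> speed[OF t]]
  note momentum_v = has_real_derivative_momentum_v
    [where u=u and u'=u' and u''=u'' and v'=v' and v''=v'', OF u u' v' \<open>u t > 0\<close> speed[OF t]]
  have "((\<lambda>s. deriv (\<lambda>p. lagr \<alpha> (u s) (v s) p (v' s)) (u' s)) has_real_derivative
      deriv (\<lambda>x. lagr \<alpha> x (v t) (u' t) (v' t)) (u t) - u t powr \<alpha> * sinh (u t) * v' t * ?\<delta>)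
      (at t within {a..b})"
    using has_field_derivative_transform_within[OF momentum_u zero_less_one t]
    unfolding deriv_lagr_x[OF \<open>u t > 0\<close> speed[OF t]] by (simp add: deriv_lagr_p speed)
  then have EL_u: "?EL_u \<longleftrightarrow> v' t * ?\<delta> = 0"
    using \<open>u t > 0\<close> by (simp add: has_real_derivative_within_Icc_iff[OF \<open>a < b\<close> t])
  have "((\<lambda>s. deriv (\<lambda>q. lagr \<alpha> (u s) (v s) (u' s) q) (v' s)) has_real_derivative
      u t powr \<alpha> * sinh (u t) * u' t * ?\<delta>) (at t within {a..b})"
    using has_field_derivative_transform_within[OF momentum_v zero_less_one t]
    by (simp add: deriv_lagr_q speed mult.assoc)
  then have EL_v: "?EL_v \<longleftrightarrow> u' t * ?\<delta> = 0"
    using \<open>u t > 0\<close> by (simp add: has_real_derivative_within_Icc_iff[OF \<open>a < b\<close> t] deriv_lagr_y)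
  show ?thesis
    using EL_u EL_v lspeed_pos_imp_velocity_nonzero[OF speed[OF t]] by auto
qed

lemma curvature_defect_eq_0_iff:
  "curvature_defect \<alpha> x p pp q qq = 0 \<longleftrightarrow> hcurv x p pp q qq = - \<alpha> * (q * sinh x) / (x * lspeed x p q)"
  unfolding curvature_defect_def by auto

theorem proposition2p1:
  fixes \<alpha> a b :: real and u v u' v' u'' v'' :: "real \<Rightarrow> real"
  assumes "\<alpha> \<noteq> 0" and "a < b"
    and "\<And>t. t \<in> {a..b} \<Longrightarrow> (u has_real_derivative u' t) (at t within {a..b})"
    and "\<And>t. t \<in> {a..b} \<Longrightarrow> (v has_real_derivative v' t) (at t within {a..b})"
    and "\<And>t. t \<in> {a..b} \<Longrightarrow> (u' has_real_derivative u'' t) (at t within {a..b})"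
    and "\<And>t. t \<in> {a..b} \<Longrightarrow> (v' has_real_derivative v'' t) (at t within {a..b})"
    and "continuous_on {a..b} u''" and "continuous_on {a..b} v''"
    and "\<And>t. t \<in> {a..b} \<Longrightarrow> u t > 0"
    and "\<And>t. t \<in> {a..b} \<Longrightarrow> lspeed (u t) (u' t) (v' t) > 0"
  shows "alpha_stationary \<alpha> u v u' v' a b \<longleftrightarrow>
    (\<forall>t\<in>{a..b}. hcurv (u t) (u' t) (u'' t) (v' t) (v'' t)
        = - \<alpha> * (v' t * sinh (u t)) / (u t * lspeed (u t) (u' t) (v' t)))"
  \<comment> \<open>The equivalence holds pointwise in \<open>t\<close>.\<close>
  unfolding alpha_stationary_def curvature_defect_eq_0_iff[symmetric]
  using assms(2,3,5,6,9,10) by (intro ball_cong refl euler_lagrange_at_iff_curvature_defect_eq_0) auto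

end
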